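(* Let $\tau$ be a self-similar tile set. Then every $\tau$-tiling of the plane is aperiodic, i.e., no $\tau$-tiling $U$ admits a nonzero vector $T\in\mathbb{Z}^2$ with $U(x+T)=U(x)$ for all $x\in\mathbb{Z}^2$.
   Context: Fix a finite set $C$ of colors. A tile is an element of $C^4$ (its left, right, top and bottom colors); a tile set is a finite subset $\tau\subset C^4$. A $\tau$-tiling (of the plane) is a map $U\colon\mathbb{Z}^2\to\tau$ such that for every $(x,y)$ the right color of $U(x,y)$ equals the left color of $U(x+1,y)$ and the top color of $U(x,y)$ equals the bottom color of $U(x,y+1)$; a tiling of a finite region is defined the same way, requiring matching only for adjacent cells inside the region. For a tile set $\tau$ and an integer $N>1$, an $N\times N$ macro-tile is a $\tau$-tiling of an $N\times N$ square; its right (left, top, bottom) macro-color is the sequence of the $N$ right (left, top, bottom) colors of the tiles along its right (left, top, bottom) side. A simulation of a tile set $\rho$ by a tile set $\tau$ with zoom factor $N>1$ is a map $S$ from $\rho$ to $N\times N$ $\tau$-macro-tiles such that: (i) $S$ is injective; (ii) for all $r_1,r_2\in\rho$, the right color of $r_1$ equals the left color of $r_2$ iff the right macro-color of $S(r_1)$ equals the left macro-color of $S(r_2)$, and similarly for top/bottom; (iii) every $\tau$-tiling of the plane can be split by horizontal and vertical lines into $N\times N$ macro-tiles all belonging to the range of $S$, and this splitting is unique. A tile set is self-similar if it simulates itself (with some zoom factor $N>1$). *)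

theory Defs
  imports Main
begin

type_synonym 'c tile = "'c \<times> 'c \<times> 'c \<times> 'c"

definition lft :: "'c tile \<Rightarrow> 'c" where "lft t = fst t"
definition rgt :: "'c tile \<Rightarrow> 'c" where "rgt t = fst (snd t)"
definition topc :: "'c tile \<Rightarrow> 'c" where "topc t = fst (snd (snd t))"
definition botc :: "'c tile \<Rightarrow> 'c" where "botc t = snd (snd (snd t))"

definition tile_set :: "'c tile set \<Rightarrow> bool" where
  "tile_set \<tau> \<longleftrightarrow> finite \<tau>"

definition tiling :: "'c tile set \<Rightarrow> (int \<times> int \<Rightarrow> 'c tile) \<Rightarrow> bool" where
  "tiling \<tau> U \<longleftrightarrow> (\<forall>x y. U (x, y) \<in> \<tau>
      \<and> rgt (U (x, y)) = lft (U (x + 1, y))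
      \<and> topc (U (x, y)) = botc (U (x, y + 1)))"

text \<open>An N x N macro-tile: a tiling of the square {0..<N} x {0..<N}; only the values
  on the square matter (values outside are ignored, see macro_eq).\<close>
definition macro_tile :: "'c tile set \<Rightarrow> nat \<Rightarrow> (nat \<times> nat \<Rightarrow> 'c tile) \<Rightarrow> bool" where
  "macro_tile \<tau> N M \<longleftrightarrow> (\<forall>i<N. \<forall>j<N. M (i, j) \<in> \<tau>
      \<and> (i + 1 < N \<longrightarrow> rgt (M (i, j)) = lft (M (i + 1, j)))
      \<and> (j + 1 < N \<longrightarrow> topc (M (i, j)) = botc (M (i, j + 1))))"

definition macro_eq :: "nat \<Rightarrow> (nat \<times> nat \<Rightarrow> 'c tile) \<Rightarrow> (nat \<times> nat \<Rightarrow> 'c tile) \<Rightarrow> bool" where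
  "macro_eq N M M' \<longleftrightarrow> (\<forall>i<N. \<forall>j<N. M (i, j) = M' (i, j))"

definition right_mc :: "nat \<Rightarrow> (nat \<times> nat \<Rightarrow> 'c tile) \<Rightarrow> 'c list" where
  "right_mc N M = map (\<lambda>j. rgt (M (N - 1, j))) [0..<N]"
definition left_mc :: "nat \<Rightarrow> (nat \<times> nat \<Rightarrow> 'c tile) \<Rightarrow> 'c list" where
  "left_mc N M = map (\<lambda>j. lft (M (0, j))) [0..<N]"
definition top_mc :: "nat \<Rightarrow> (nat \<times> nat \<Rightarrow> 'c tile) \<Rightarrow> 'c list" where
  "top_mc N M = map (\<lambda>i. topc (M (i, N - 1))) [0..<N]"
definition bot_mc :: "nat \<Rightarrow> (nat \<times> nat \<Rightarrow> 'c tile) \<Rightarrow> 'c list" where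
  "bot_mc N M = map (\<lambda>i. botc (M (i, 0))) [0..<N]"

definition block :: "(int \<times> int \<Rightarrow> 'c tile) \<Rightarrow> nat \<Rightarrow> int \<Rightarrow> int \<Rightarrow> nat \<times> nat \<Rightarrow> 'c tile" where
  "block U N x0 y0 = (\<lambda>(i, j). U (x0 + int i, y0 + int j))"

definition good_split ::
  "'c tile set \<Rightarrow> ('c tile \<Rightarrow> nat \<times> nat \<Rightarrow> 'c tile) \<Rightarrow> nat \<Rightarrow> (int \<times> int \<Rightarrow> 'c tile) \<Rightarrow> nat \<Rightarrow> nat \<Rightarrow> bool" where
  "good_split \<rho> S N U a b \<longleftrightarrow> (\<forall>k l :: int. \<exists>r\<in>\<rho>.
      macro_eq N (block U N (int a + k * int N) (int b + l * int N)) (S r))"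

text \<open>Simulation of rho by tau with zoom factor N. A splitting by horizontal and vertical
  lines into N x N squares is determined by the offset (a, b) modulo N.\<close>
definition simulates ::
  "'c tile set \<Rightarrow> 'c tile set \<Rightarrow> nat \<Rightarrow> ('c tile \<Rightarrow> nat \<times> nat \<Rightarrow> 'c tile) \<Rightarrow> bool" where
  "simulates \<tau> \<rho> N S \<longleftrightarrow> N > 1
     \<and> (\<forall>r\<in>\<rho>. macro_tile \<tau> N (S r))
     \<and> (\<forall>r1\<in>\<rho>. \<forall>r2\<in>\<rho>. macro_eq N (S r1) (S r2) \<longrightarrow> r1 = r2)
     \<and> (\<forall>r1\<in>\<rho>. \<forall>r2\<in>\<rho>. (rgt r1 = lft r2 \<longleftrightarrow> right_mc N (S r1) = left_mc N (S r2)))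
     \<and> (\<forall>r1\<in>\<rho>. \<forall>r2\<in>\<rho>. (topc r1 = botc r2 \<longleftrightarrow> top_mc N (S r1) = bot_mc N (S r2)))
     \<and> (\<forall>U. tiling \<tau> U \<longrightarrow> (\<exists>!(a, b). a < N \<and> b < N \<and> good_split \<rho> S N U a b))"

definition self_similar :: "'c tile set \<Rightarrow> bool" where
  "self_similar \<tau> \<longleftrightarrow> tile_set \<tau> \<and> (\<exists>N S. simulates \<tau> \<tau> N S)"

end

theory Submission
  imports Defs
begin

(* Let tau simulate rho with zoom factor N, and let U be a tau-tiling with period T.
   (1) Translating U by T maps its unique splitting into macro-tiles onto a splitting
       of U again; uniqueness of the splitting forces N to divide both coordinates of T.
   (2) Reading off, for every macro-tile of the splitting, the rho-tile it represents
       ("desubstitution") yields a rho-tiling, because the simulation matches colors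
       of rho-tiles exactly when it matches macro-colors; this rho-tiling has period T/N.
   For a self-similar tau (rho = tau) a nonzero period T thus produces a tau-tiling with
   the strictly shorter nonzero period T/N, which is impossible by infinite descent on
   |T1| + |T2|. *)

abbreviation periodic :: "(int \<times> int \<Rightarrow> 'c tile) \<Rightarrow> int \<Rightarrow> int \<Rightarrow> bool" where
  "periodic U t1 t2 \<equiv> \<forall>x y. U (x + t1, y + t2) = U (x, y)"

lemma block_periodic:
  assumes "periodic U t1 t2"
  shows "block U N (x0 + t1) (y0 + t2) = block U N x0 y0"
proof
  fix p :: "nat \<times> nat"
  obtain i j where p: "p = (i, j)" by (cases p)
  have "U (x0 + t1 + int i, y0 + t2 + int j) = U ((x0 + int i) + t1, (y0 + int j) + t2)"
    by (simp add: algebra_simps)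
  also have "\<dots> = U (x0 + int i, y0 + int j)" using assms by blast
  finally show "block U N (x0 + t1) (y0 + t2) p = block U N x0 y0 p"
    by (simp add: block_def p)
qed

lemma good_split_translate:
  assumes split: "good_split \<rho> S N U a b" and per: "periodic U t1 t2"
    and a': "int a' = int a + t1 + c * int N" and b': "int b' = int b + t2 + d * int N"
  shows "good_split \<rho> S N U a' b'"
  unfolding good_split_def
proof (intro allI)
  fix k l :: int
  have "block U N (int a' + k * int N) (int b' + l * int N)
      = block U N ((int a + (k + c) * int N) + t1) ((int b + (l + d) * int N) + t2)"
    using a' b' by (simp add: algebra_simps)
  also have "\<dots> = block U N (int a + (k + c) * int N) (int b + (l + d) * int N)"
    using block_periodic[OF per] by blast
  finally show "\<exists>r\<in>\<rho>. macro_eq N (block U N (int a' + k * int N) (int b' + l * int N)) (S r)"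
    using split unfolding good_split_def by metis
qed

lemma ex1_pair: "(\<exists>!(a, b). P a b) \<longleftrightarrow> (\<exists>a b. P a b \<and> (\<forall>a' b'. P a' b' \<longrightarrow> a' = a \<and> b' = b))"
  unfolding Ex1_def split_paired_Ex split_paired_All by auto

lemma unique_splitting:
  assumes "simulates \<tau> \<rho> N S" and "tiling \<tau> U"
  obtains a b where "a < N" "b < N" "good_split \<rho> S N U a b"
    and "\<And>a' b'. a' < N \<Longrightarrow> b' < N \<Longrightarrow> good_split \<rho> S N U a' b' \<Longrightarrow> a' = a \<and> b' = b"
proof -
  have "\<exists>!(a, b). a < N \<and> b < N \<and> good_split \<rho> S N U a b"
    using assms by (simp add: simulates_def)
  then show thesis using that unfolding ex1_pair by blast
qed

text \<open>Step (1): every period of a tiling by a simulating tile set is a multiple of the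
  zoom factor, because the translated splitting must coincide with the unique one.\<close>
lemma period_multiple_of_zoom:
  assumes sim: "simulates \<tau> \<rho> N S" and til: "tiling \<tau> U" and per: "periodic U t1 t2"
  shows "int N dvd t1 \<and> int N dvd t2"
proof -
  have N: "int N > 0" using sim by (simp add: simulates_def)
  obtain a b where ab: "a < N" "b < N" "good_split \<rho> S N U a b"
    and unique: "\<And>a' b'. a' < N \<Longrightarrow> b' < N \<Longrightarrow> good_split \<rho> S N U a' b' \<Longrightarrow> a' = a \<and> b' = b"
    using unique_splitting[OF sim til] by blast
  define a' where "a' = nat ((int a + t1) mod int N)"
  define b' where "b' = nat ((int b + t2) mod int N)"
  have a'_mod: "int a' = (int a + t1) mod int N" and b'_mod: "int b' = (int b + t2) mod int N"
    using N by (simp_all add: a'_def b'_def)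
  have "int a' = int a + t1 + (- ((int a + t1) div int N)) * int N"
    and "int b' = int b + t2 + (- ((int b + t2) div int N)) * int N"
    using a'_mod b'_mod div_mult_mod_eq[of "int a + t1" "int N"] div_mult_mod_eq[of "int b + t2" "int N"]
    by linarith+
  then have "good_split \<rho> S N U a' b'" by (rule good_split_translate[OF ab(3) per])
  moreover have "a' < N" "b' < N" using N by (simp_all add: a'_def b'_def nat_less_iff)
  ultimately have "a' = a" "b' = b" using unique by blast+
  then have "(int a + t1) mod int N = int a mod int N" "(int b + t2) mod int N = int b mod int N"
    using a'_mod b'_mod ab(1,2) by simp_all
  then show ?thesis by (simp add: mod_eq_dvd_iff)
qed

definition desubst ::
  "'c tile set \<Rightarrow> ('c tile \<Rightarrow> nat \<times> nat \<Rightarrow> 'c tile) \<Rightarrow> nat \<Rightarrow> (int \<times> int \<Rightarrow> 'c tile)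
     \<Rightarrow> nat \<Rightarrow> nat \<Rightarrow> int \<times> int \<Rightarrow> 'c tile" where
  "desubst \<rho> S N U a b = (\<lambda>(k, l). SOME r. r \<in> \<rho> \<and>
      macro_eq N (block U N (int a + k * int N) (int b + l * int N)) (S r))"

lemma desubst_spec:
  assumes "good_split \<rho> S N U a b"
  shows "desubst \<rho> S N U a b (k, l) \<in> \<rho>"
    and "\<And>i j. i < N \<Longrightarrow> j < N \<Longrightarrow>
      S (desubst \<rho> S N U a b (k, l)) (i, j) = U (int a + k * int N + int i, int b + l * int N + int j)"
proof -
  have "\<exists>r. r \<in> \<rho> \<and> macro_eq N (block U N (int a + k * int N) (int b + l * int N)) (S r)"
    using assms unfolding good_split_def by blast
  then have spec: "desubst \<rho> S N U a b (k, l) \<in> \<rho> \<and>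
      macro_eq N (block U N (int a + k * int N) (int b + l * int N)) (S (desubst \<rho> S N U a b (k, l)))"
    unfolding desubst_def prod.case by (rule someI_ex)
  then show "desubst \<rho> S N U a b (k, l) \<in> \<rho>" by blast
  show "S (desubst \<rho> S N U a b (k, l)) (i, j) = U (int a + k * int N + int i, int b + l * int N + int j)"
    if "i < N" "j < N" for i j
    using spec that by (simp add: macro_eq_def block_def)
qed

text \<open>Neighbouring macro-tiles of the splitting have matching macro-colors, since they
  are glued together inside the tiling U.\<close>
lemma desubst_macro_colors:
  assumes til: "tiling \<tau> U" and split: "good_split \<rho> S N U a b" and N: "N > 0"
  defines "V \<equiv> desubst \<rho> S N U a b"
  shows "right_mc N (S (V (k, l))) = left_mc N (S (V (k + 1, l)))"
    and "top_mc N (S (V (k, l))) = bot_mc N (S (V (k, l + 1)))"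
proof -
  have cell: "S (V (k, l)) (i, j) = U (int a + k * int N + int i, int b + l * int N + int j)"
    if "i < N" "j < N" for k l i j
    unfolding V_def using desubst_spec(2)[OF split that] .
  have next_block: "c + m * int N + int (N - 1) + 1 = c + (m + 1) * int N + int 0" for c m
    using N by (simp add: algebra_simps of_nat_diff)
  have "rgt (S (V (k, l)) (N - 1, j)) = lft (S (V (k + 1, l)) (0, j))" if j: "j < N" for j
  proof -
    have "rgt (S (V (k, l)) (N - 1, j)) = rgt (U (int a + k * int N + int (N - 1), int b + l * int N + int j))"
      using cell j N by simp
    also have "\<dots> = lft (U (int a + k * int N + int (N - 1) + 1, int b + l * int N + int j))"
      using til by (simp add: tiling_def)
    also have "\<dots> = lft (S (V (k + 1, l)) (0, j))"
      using cell j N by (simp only: next_block)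
    finally show ?thesis .
  qed
  then show "right_mc N (S (V (k, l))) = left_mc N (S (V (k + 1, l)))"
    by (simp add: right_mc_def left_mc_def)
  have "topc (S (V (k, l)) (i, N - 1)) = botc (S (V (k, l + 1)) (i, 0))" if i: "i < N" for i
  proof -
    have "topc (S (V (k, l)) (i, N - 1)) = topc (U (int a + k * int N + int i, int b + l * int N + int (N - 1)))"
      using cell i N by simp
    also have "\<dots> = botc (U (int a + k * int N + int i, int b + l * int N + int (N - 1) + 1))"
      using til by (simp add: tiling_def)
    also have "\<dots> = botc (S (V (k, l + 1)) (i, 0))"
      using cell i N by (simp only: next_block)
    finally show ?thesis .
  qed
  then show "top_mc N (S (V (k, l))) = bot_mc N (S (V (k, l + 1)))"
    by (simp add: top_mc_def bot_mc_def)
qed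

text \<open>Step (2a): the desubstitution is a rho-tiling, because the simulation matches colors
  of rho-tiles exactly when it matches the corresponding macro-colors.\<close>
lemma desubst_tiling:
  assumes sim: "simulates \<tau> \<rho> N S" and til: "tiling \<tau> U" and split: "good_split \<rho> S N U a b"
  shows "tiling \<rho> (desubst \<rho> S N U a b)"
  unfolding tiling_def
proof (intro allI conjI)
  fix k l
  let ?V = "desubst \<rho> S N U a b"
  have N: "N > 0" and
    horiz: "\<forall>r1\<in>\<rho>. \<forall>r2\<in>\<rho>. rgt r1 = lft r2 \<longleftrightarrow> right_mc N (S r1) = left_mc N (S r2)" and
    vert: "\<forall>r1\<in>\<rho>. \<forall>r2\<in>\<rho>. topc r1 = botc r2 \<longleftrightarrow> top_mc N (S r1) = bot_mc N (S r2)"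
    using sim by (simp_all add: simulates_def)
  have tiles: "?V (k', l') \<in> \<rho>" for k' l' by (rule desubst_spec(1)[OF split])
  then show "?V (k, l) \<in> \<rho>" .
  show "rgt (?V (k, l)) = lft (?V (k + 1, l))"
    using horiz tiles desubst_macro_colors(1)[OF til split N] by blast
  show "topc (?V (k, l)) = botc (?V (k, l + 1))"
    using vert tiles desubst_macro_colors(2)[OF til split N] by blast
qed

lemma desubst_periodic:
  assumes "periodic U (q1 * int N) (q2 * int N)"
  shows "periodic (desubst \<rho> S N U a b) q1 q2"
proof (intro allI)
  fix k l
  have "block U N (int a + (k + q1) * int N) (int b + (l + q2) * int N)
      = block U N ((int a + k * int N) + q1 * int N) ((int b + l * int N) + q2 * int N)"
    by (simp add: algebra_simps)
  also have "\<dots> = block U N (int a + k * int N) (int b + l * int N)"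
    by (rule block_periodic[OF assms])
  finally show "desubst \<rho> S N U a b (k + q1, l + q2) = desubst \<rho> S N U a b (k, l)"
    by (simp add: desubst_def)
qed

lemma zoom_shrinks_period:
  assumes "N > 1" and "(q1, q2) \<noteq> (0, 0)"
  shows "\<bar>q1\<bar> + \<bar>q2\<bar> < \<bar>q1 * int N\<bar> + \<bar>q2 * int N\<bar>"
proof -
  have "\<bar>q\<bar> \<le> \<bar>q * int N\<bar>" and "q \<noteq> 0 \<Longrightarrow> \<bar>q\<bar> < \<bar>q * int N\<bar>" for q :: int
    using assms(1) by (simp_all add: abs_mult mult_le_cancel_left1)
  then show ?thesis using assms(2) by (metis add_le_less_mono add_less_le_mono prod.inject)
qed

lemma self_similar_no_period:
  assumes sim: "simulates \<tau> \<tau> N S"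
  shows "tiling \<tau> U \<Longrightarrow> periodic U t1 t2 \<Longrightarrow> t1 = 0 \<and> t2 = 0"
proof (induction "nat (\<bar>t1\<bar> + \<bar>t2\<bar>)" arbitrary: U t1 t2 rule: less_induct)
  case less
  obtain q1 q2 where t: "t1 = q1 * int N" "t2 = q2 * int N"
    using period_multiple_of_zoom[OF sim less.prems] by (metis dvd_def mult.commute)
  obtain a b where "good_split \<tau> S N U a b" using unique_splitting[OF sim less.prems(1)] .
  then have coarse_tiling: "tiling \<tau> (desubst \<tau> S N U a b)"
    by (rule desubst_tiling[OF sim less.prems(1)])
  have coarse_period: "periodic (desubst \<tau> S N U a b) q1 q2"
    using less.prems(2) unfolding t by (rule desubst_periodic)
  have N: "N > 1" using sim by (simp add: simulates_def)
  show ?case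
  proof (rule ccontr)
    assume "\<not> (t1 = 0 \<and> t2 = 0)"
    then have nonzero: "(q1, q2) \<noteq> (0, 0)" using t by auto
    then have "nat (\<bar>q1\<bar> + \<bar>q2\<bar>) < nat (\<bar>t1\<bar> + \<bar>t2\<bar>)"
      using zoom_shrinks_period[OF N nonzero] t by simp
    then have "q1 = 0 \<and> q2 = 0" using less.hyps coarse_tiling coarse_period by blast
    with nonzero show False by simp
  qed
qed

theorem mainTheorem1:
  fixes \<tau> :: "'c tile set"
  assumes "self_similar \<tau>"
  shows "\<forall>U. tiling \<tau> U \<longrightarrow>
           \<not> (\<exists>T :: int \<times> int. T \<noteq> (0, 0) \<and>
                (\<forall>x y. U (x + fst T, y + snd T) = U (x, y)))"
proof -
  obtain N S where "simulates \<tau> \<tau> N S" using assms by (auto simp: self_similar_def)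
  then show ?thesis using self_similar_no_period by (metis prod.collapse)
qed

end
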